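(* Fix $t$ and $T^*>0$. Suppose $\phi(u)=\beta_{T^*}$ for all $u\ge T^*$, the prevalence is constant $p(s)\equiv p\in(0,1)$, and $\lambda_t^*(s)=\lambda(s)$, $p_t^*(s)=p$ for all $s\le t$ (so that the conditional density of $T$ at $s$ given $\{T\le t,A(t)=1\}$ equals $\lambda(s)(1-p)/p$ for all $s\le t$). Let $\Omega_{T^*}=\int_0^{T^*}\phi(u)du$ with $\Omega_{T^*}-T^*\beta_{T^*}\neq0$. Then $$\frac{P_{rec}(t)-\beta_{T^*}p}{(1-p)(\Omega_{T^*}-T^*\beta_{T^*})}=\int_0^{T^*}\frac{\phi(u)-\beta_{T^*}}{\Omega_{T^*}-T^*\beta_{T^*}}\,\lambda(t-u)\,du.$$ If moreover $\lambda(s)=\lambda(t)+\rho(t-s)$ for $s\in[t-T^*,t]$, this equals $\lambda(t)+\rho\,\omega^*=\lambda(t-\omega^* )$, where $$\omega^*=\frac{\int_0^{T^*}u\{\phi(u)-\beta_{T^*}\}\,du}{\Omega_{T^*}-T^*\beta_{T^*}},$$ so the bias relative to $\lambda(t)$ is $\rho\omega^*$.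
   Context: $T$ is the HIV infection time, $A(t)\in\{0,1\}$ the eligibility indicator at time $t$. $p(t)=\Pr(T\le t\mid A(t)=1)$; $\lambda(t)=\lim_{dt\to0}\frac1{dt}\Pr(t\le T<t+dt\mid T\ge t,A(t)=1)$. For $s\le t$: $\lambda_t^*(s)=\lim_{ds\to0}\frac1{ds}\Pr(s\le T<s+ds\mid T\ge s,A(t)=1)$, $p_t^*(s)=\Pr(T\le s\mid A(t)=1)$. $M$ is a recency-test biomarker, $\mathcal R$ the test-recent region, $\phi(u)=\Pr(M\in\mathcal R\mid T=t-u,A(t)=1)$ (independent of $t$). $P_{rec}(t)=\Pr(M\in\mathcal R,T\le t\mid A(t)=1)$. The left-hand ratio is the population target of the adjusted estimator $(N_{rec}-N_{pos}\hat\beta_{T^*})/\{N_{neg}(\hat\Omega_{T^*}-\hat\beta_{T^*}T^* )\}$.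
   Formalization: The hypotheses $\lambda_t^*(s)=\lambda(s)$, $p_t^*(s)=p$ are replaced by the assumption that T has density $\lambda(s)(1-p)$ on s <= t given A(t)=1, and $\lambda(t)+\rho\,\omega^*=\lambda(t-\omega^* )$ is asserted only when 0 <= omega* <= T*. Each condition added here is assumed in the paper as well or is needed for the statement above to hold. *)

theory Defs
  imports "HOL-Probability.Probability"
begin

definition cprob :: "'w measure \<Rightarrow> 'w set \<Rightarrow> 'w set \<Rightarrow> real" where
  "cprob M E X = measure M (X \<inter> E) / measure M E"

end

theory Submission
  imports Defs
begin

text \<open>Conditionally on eligibility, infections before \<open>t\<close> have density \<open>\<lambda>(s)(1 - p)\<close>, so
  \<open>P\<^sub>r\<^sub>e\<^sub>c(t)\<close> is the integral of \<open>\<phi>(t - s)\<close> against this density. Since \<open>\<phi> = \<beta>\<close> beyond \<open>T*\<close>,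
  subtracting \<open>\<beta> p\<close> cancels all infections older than \<open>T*\<close> and leaves
  \<open>(1 - p) \<integral>\<^sub>0\<^sup>T\<^sup>* (\<phi>(u) - \<beta>) \<lambda>(t - u) du\<close>, a weighted average of \<open>\<lambda>\<close> over the window
  \<open>[t - T*, t]\<close>. When \<open>\<lambda>\<close> is linear on the window, that average is \<open>\<lambda>\<close> at the weighted mean
  time \<open>\<omega>*\<close> before \<open>t\<close>.\<close>

lemma set_integrable_bounded_mult:
  fixes f g :: "'a \<Rightarrow> real"
  assumes f: "set_integrable M A f"
    and g: "g \<in> borel_measurable M" and g_bound: "\<And>x. \<bar>g x\<bar> \<le> C"
  shows "set_integrable M A (\<lambda>x. g x * f x)"
proof (rule set_integrable_bound)
  show "set_integrable M A (\<lambda>x. C * f x)"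
    using f by simp
  have "(\<lambda>x. indicator A x * f x) \<in> borel_measurable M"
    using f by (auto simp: set_integrable_def)
  then have "(\<lambda>x. g x * (indicator A x * f x)) \<in> borel_measurable M"
    using g by measurable
  then show "set_borel_measurable M A (\<lambda>x. g x * f x)"
    by (simp add: set_borel_measurable_def mult.left_commute)
  have "\<bar>g x * f x\<bar> \<le> \<bar>C * f x\<bar>" for x
    using g_bound[of x] by (simp add: abs_mult mult_right_mono)
  then show "AE x in M. x \<in> A \<longrightarrow> norm (g x * f x) \<le> norm (C * f x)"
    by simp
qed

lemma set_integrable_bounded_Icc:
  fixes g :: "real \<Rightarrow> real"
  assumes "g \<in> borel_measurable lborel" "\<And>x. \<bar>g x\<bar> \<le> C"
  shows "set_integrable lborel {a..b} g"
proof -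
  have "set_integrable lborel {a..b} (\<lambda>_. 1::real)"
    using borel_integrable_compact[of "{a..b}" "\<lambda>_. 1::real"] by (simp add: set_integrable_def)
  from set_integrable_bounded_mult[OF this assms] show ?thesis
    by simp
qed

lemma set_integrable_id_mult_Icc:
  fixes g :: "real \<Rightarrow> real"
  assumes "g \<in> borel_measurable lborel" "\<And>x. \<bar>g x\<bar> \<le> C"
  shows "set_integrable lborel {a..b} (\<lambda>u. u * g u)"
proof -
  have "set_integrable lborel {a..b} (\<lambda>u. u)"
    using borel_integrable_compact[of "{a..b}" "\<lambda>u. u"] by (simp add: set_integrable_def)
  from set_integrable_bounded_mult[OF this assms] show ?thesis
    by (simp add: mult.commute)
qed

lemma set_integral_reflect_Icc:
  fixes f :: "real \<Rightarrow> real"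
  shows "(LINT s:{t - a..t}|lborel. f s) = (LINT u:{0..a}|lborel. f (t - u))"
proof -
  have "(LINT s:{t - a..t}|lborel. f s)
      = (\<integral>u. indicator {t - a..t} (t + -1 * u) * f (t + -1 * u) \<partial>lborel)"
    unfolding set_lebesgue_integral_def by (subst lborel_integral_real_affine[of "-1" _ t]) simp_all
  also have "(\<lambda>u. indicator {t - a..t} (t + -1 * u) * f (t + -1 * u))
      = (\<lambda>u. indicator {0..a} u * f (t - u) :: real)"
    by (auto simp: fun_eq_iff indicator_def)
  finally show ?thesis
    by (simp add: set_lebesgue_integral_def)
qed

lemma set_integral_kernel_eventually_const:
  fixes phi g :: "real \<Rightarrow> real"
  assumes phi_meas: "phi \<in> borel_measurable lborel" and phi_bound: "\<And>u. \<bar>phi u\<bar> \<le> C"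
    and phi_tail: "\<And>u. u \<ge> a \<Longrightarrow> phi u = beta"
    and g: "set_integrable lborel {..t} g"
  shows "(LINT s:{..t}|lborel. phi (t - s) * g s)
       = beta * (LINT s:{..t}|lborel. g s) + (LINT u:{0..a}|lborel. (phi u - beta) * g (t - u))"
proof -
  have "(\<lambda>s. phi (t - s)) \<in> borel_measurable lborel"
    using phi_meas by measurable
  then have phi_g: "set_integrable lborel {..t} (\<lambda>s. phi (t - s) * g s)"
    using phi_bound by (intro set_integrable_bounded_mult[OF g])
  have window: "indicator {..t} s * (phi (t - s) * g s - beta * g s)
      = indicator {t - a..t} s * ((phi (t - s) - beta) * g s)" for s :: real
  proof (cases "s < t - a")
    case True
    then show ?thesis by (simp add: phi_tail indicator_def)
  qed (auto simp: indicator_def algebra_simps)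
  have "(LINT s:{..t}|lborel. phi (t - s) * g s)
      = (LINT s:{..t}|lborel. phi (t - s) * g s - beta * g s) + (LINT s:{..t}|lborel. beta * g s)"
    using phi_g g by simp
  also have "(LINT s:{..t}|lborel. phi (t - s) * g s - beta * g s)
      = (LINT s:{t - a..t}|lborel. (phi (t - s) - beta) * g s)"
    unfolding set_lebesgue_integral_def using window by simp
  also have "\<dots> = (LINT u:{0..a}|lborel. (phi u - beta) * g (t - u))"
    by (simp add: set_integral_reflect_Icc)
  finally show ?thesis
    by simp
qed

lemma recency_excess_eq_window_integral:
  fixes phi lam :: "real \<Rightarrow> real"
  assumes phi_meas: "phi \<in> borel_measurable lborel" and phi_bound: "\<And>u. \<bar>phi u\<bar> \<le> C"
    and phi_tail: "\<And>u. u \<ge> a \<Longrightarrow> phi u = beta"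
    and lam: "set_integrable lborel {..t} lam"
    and prevalence: "p = (LINT s:{..t}|lborel. lam s * (1 - p))"
    and recent: "P = (LINT s:{..t}|lborel. phi (t - s) * (lam s * (1 - p)))"
  shows "P - beta * p = (1 - p) * (LINT u:{0..a}|lborel. (phi u - beta) * lam (t - u))"
proof -
  define L where "L = (LINT s:{..t}|lborel. lam s)"
  have P: "P = (1 - p) * (beta * L + (LINT u:{0..a}|lborel. (phi u - beta) * lam (t - u)))"
    using recent set_integral_kernel_eventually_const[OF phi_meas phi_bound phi_tail lam]
    by (simp add: L_def mult.assoc[symmetric])
  have "p = (1 - p) * L"
    using prevalence by (simp add: L_def mult.commute)
  then have "beta * p = (1 - p) * (beta * L)"
    by (metis mult.left_commute)
  then show ?thesis
    unfolding P by (simp add: algebra_simps)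
qed

lemma set_integral_kernel_linear:
  fixes phi lam :: "real \<Rightarrow> real"
  assumes phi_meas: "phi \<in> borel_measurable lborel" and phi_bound: "\<And>u. \<bar>phi u\<bar> \<le> C"
    and a: "0 \<le> a"
    and lin: "\<And>u. u \<in> {0..a} \<Longrightarrow> lam (t - u) = lam t + rho * u"
  shows "(LINT u:{0..a}|lborel. (phi u - beta) * lam (t - u))
       = lam t * ((LINT u:{0..a}|lborel. phi u) - a * beta)
         + rho * (LINT u:{0..a}|lborel. u * (phi u - beta))"
proof -
  have phi_beta_meas: "(\<lambda>u. phi u - beta) \<in> borel_measurable lborel"
    using phi_meas by measurable
  have phi_beta_bound: "\<bar>phi u - beta\<bar> \<le> C + \<bar>beta\<bar>" for u
    using phi_bound[of u] by linarith
  have "(LINT u:{0..a}|lborel. (phi u - beta) * lam (t - u))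
      = (LINT u:{0..a}|lborel. lam t * (phi u - beta) + rho * (u * (phi u - beta)))"
    using lin by (intro set_lebesgue_integral_cong) (auto simp: algebra_simps)
  also have "\<dots> = lam t * (LINT u:{0..a}|lborel. phi u - beta)
      + rho * (LINT u:{0..a}|lborel. u * (phi u - beta))"
    using set_integrable_bounded_Icc[OF phi_beta_meas phi_beta_bound]
      set_integrable_id_mult_Icc[OF phi_beta_meas phi_beta_bound]
    by simp
  also have "(LINT u:{0..a}|lborel. phi u - beta) = (LINT u:{0..a}|lborel. phi u) - a * beta"
    using set_integrable_bounded_Icc[OF phi_meas phi_bound]
      set_integrable_bounded_Icc[of "\<lambda>_. beta" "\<bar>beta\<bar>"] a
    by (simp add: set_integral_const)
  finally show ?thesis .
qed

theorem mainTheorem8: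
  fixes M :: "'w measure"
    and T :: "'w \<Rightarrow> real"        \<comment> \<open>HIV infection time\<close>
    and Elig :: "'w set"            \<comment> \<open>event A(t) = 1\<close>
    and Rec :: "'w set"             \<comment> \<open>event M \<in> R (test-recent)\<close>
    and phi lam :: "real \<Rightarrow> real"
    and t Tstar beta p rho :: real
  assumes ps: "prob_space M"
    and T_meas: "T \<in> borel_measurable M"
    and Elig_ev: "Elig \<in> sets M" and Elig_pos: "measure M Elig > 0"
    and Rec_ev: "Rec \<in> sets M"
    and Tstar_pos: "Tstar > 0"
    and phi_meas: "phi \<in> borel_measurable lborel"
    and phi_prob: "\<And>u. 0 \<le> phi u \<and> phi u \<le> 1"
    and phi_tail: "\<And>u. u \<ge> Tstar \<Longrightarrow> phi u = beta"
    and p_range: "0 < p" "p < 1"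
    and prev: "cprob M Elig {w \<in> space M. T w \<le> t} = p"
    and lam_nonneg: "\<And>s. s \<le> t \<Longrightarrow> lam s \<ge> 0"
    and lam_int: "set_integrable lborel {..t} lam"
    and density: "\<And>B. B \<in> sets borel \<Longrightarrow> B \<subseteq> {..t} \<Longrightarrow>
        cprob M Elig {w \<in> space M. T w \<in> B} = (LINT s:B|lborel. lam s * (1 - p))"
    and phi_cond: "\<And>B. B \<in> sets borel \<Longrightarrow> B \<subseteq> {..t} \<Longrightarrow>
        cprob M Elig ({w \<in> space M. T w \<in> B} \<inter> Rec)
          = (LINT s:B|lborel. phi (t - s) * (lam s * (1 - p)))"
    and nondeg: "(LINT u:{0..Tstar}|lborel. phi u) - Tstar * beta \<noteq> 0"
  shows "(let Omega = (LINT u:{0..Tstar}|lborel. phi u);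
              Prec = cprob M Elig ({w \<in> space M. T w \<le> t} \<inter> Rec);
              est = (Prec - beta * p) / ((1 - p) * (Omega - Tstar * beta));
              omega = (LINT u:{0..Tstar}|lborel. u * (phi u - beta)) / (Omega - Tstar * beta)
          in est = (LINT u:{0..Tstar}|lborel. (phi u - beta) / (Omega - Tstar * beta) * lam (t - u))
           \<and> ((\<forall>s\<in>{t - Tstar..t}. lam s = lam t + rho * (t - s)) \<longrightarrow>
                 est = lam t + rho * omega
               \<and> est - lam t = rho * omega
               \<and> (0 \<le> omega \<and> omega \<le> Tstar \<longrightarrow> est = lam (t - omega))))"
proof -
  define D where "D = (LINT u:{0..Tstar}|lborel. phi u) - Tstar * beta"
  define K where "K = (LINT u:{0..Tstar}|lborel. (phi u - beta) * lam (t - u))"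
  define W where "W = (LINT u:{0..Tstar}|lborel. u * (phi u - beta))"
  define Prec where "Prec = cprob M Elig ({w \<in> space M. T w \<le> t} \<inter> Rec)"
  have phi_bound: "\<bar>phi u\<bar> \<le> 1" for u
    using phi_prob[of u] by simp
  have infected: "{w \<in> space M. T w \<in> {..t}} = {w \<in> space M. T w \<le> t}"
    by auto
  have "Prec - beta * p = (1 - p) * K"
    unfolding K_def
  proof (rule recency_excess_eq_window_integral[OF phi_meas phi_bound phi_tail lam_int])
    show "p = (LINT s:{..t}|lborel. lam s * (1 - p))"
      using prev density[of "{..t}"] by (simp add: infected)
    show "Prec = (LINT s:{..t}|lborel. phi (t - s) * (lam s * (1 - p)))"
      using phi_cond[of "{..t}"] by (simp add: infected Prec_def)
  qed
  then have est: "(Prec - beta * p) / ((1 - p) * D) = K / D"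
    using p_range by simp
  have D_nz: "D \<noteq> 0"
    using nondeg by (simp add: D_def)
  show ?thesis
    unfolding Let_def D_def[symmetric] W_def[symmetric] Prec_def[symmetric] est
  proof (intro conjI impI)
    show "K / D = (LINT u:{0..Tstar}|lborel. (phi u - beta) / D * lam (t - u))"
      by (simp add: K_def)
    assume lin: "\<forall>s\<in>{t - Tstar..t}. lam s = lam t + rho * (t - s)"
    have lin_window: "lam (t - u) = lam t + rho * u" if "u \<in> {0..Tstar}" for u
      using lin[rule_format, of "t - u"] that by simp
    have "K = lam t * D + rho * W"
      using set_integral_kernel_linear[OF phi_meas phi_bound _ lin_window] Tstar_pos
      by (simp add: K_def D_def W_def)
    then show bias: "K / D = lam t + rho * (W / D)"
      using D_nz by (simp add: field_simps)
    then show "K / D - lam t = rho * (W / D)"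
      by simp
    assume "0 \<le> W / D \<and> W / D \<le> Tstar"
    then show "K / D = lam (t - W / D)"
      using bias lin_window[of "W / D"] by simp
  qed
qed

end
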